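(* Let $1<q<\infty$, $\alpha,\beta\in\mathbb R$, and let $f\in\mathbb W_q^{\alpha,\beta}$ be nonnegative on $[-1,1]$. Then, for every $\delta>0$, \[ \omega_\varphi^1(f,\delta)_{w_{\alpha,\beta},q}\le c\,\omega_\varphi^1(f^q,\delta)_{w_{q\alpha,q\beta},1}^{1/q}, \] with $c$ independent of $f$ and $\delta$.
   Context: For $x\in[-1,1]$, $\varphi(x)=\sqrt{1-x^2}$, $w_{\alpha,\beta}(x)=(1+x)^\alpha(1-x)^\beta$. $\|g\|_{L_q(S)}$ is the $L_q$ norm over $S$; $\mathbb W_q^{\alpha,\beta}=\{f:\|w_{\alpha,\beta}f\|_{L_q[-1,1]}<\infty\}$. $\Delta_h^1(f,x)=f(x+h/2)-f(x-h/2)$ if $x\pm h/2\in[-1,1]$, else $0$; $\overrightarrow\Delta_h^1(f,x)=\Delta_h^1(f,x+h/2)$, $\overleftarrow\Delta_h^1(f,x)=\Delta_h^1(f,x-h/2)$. For a weight $w$ and $1\le q\le\infty$: $\Omega_\varphi^1(f,\delta)_{w,q}=\sup_{0<h\le\delta}\|w(x)\Delta^1_{h\varphi(x)}(f,x)\|_{L_q[-1+2h^2,1-2h^2]}$, $\overrightarrow\Omega_\varphi^1(f,\delta)_{w,q}=\sup_{0<h\le2\delta^2}\|w\overrightarrow\Delta_h^1(f,\cdot)\|_{L_q[-1,-1+2\delta^2]}$, $\overleftarrow\Omega_\varphi^1(f,\delta)_{w,q}=\sup_{0<h\le2\delta^2}\|w\overleftarrow\Delta_h^1(f,\cdot)\|_{L_q[1-2\delta^2,1]}$,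 and $\omega_\varphi^1=\Omega_\varphi^1+\overrightarrow\Omega_\varphi^1+\overleftarrow\Omega_\varphi^1$. *)

theory Defs
  imports "HOL-Analysis.Analysis"
begin

definition phi :: "real \<Rightarrow> real" where
  "phi x = sqrt (1 - x\<^sup>2)"

definition wab :: "real \<Rightarrow> real \<Rightarrow> real \<Rightarrow> real" where
  "wab \<alpha> \<beta> x = (1 + x) powr \<alpha> * (1 - x) powr \<beta>"

definition eroot :: "real \<Rightarrow> ennreal \<Rightarrow> ennreal" where
  "eroot q I = (if I = \<infinity> then \<infinity> else ennreal (enn2real I powr (1 / q)))"

definition Lq_norm :: "real \<Rightarrow> real set \<Rightarrow> (real \<Rightarrow> real) \<Rightarrow> ennreal" where
  "Lq_norm q S g = eroot q (\<integral>\<^sup>+ x \<in> S. ennreal (\<bar>g x\<bar> powr q) \<partial>lborel)"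

definition Delta1 :: "(real \<Rightarrow> real) \<Rightarrow> real \<Rightarrow> real \<Rightarrow> real" where
  "Delta1 f h x = (if x + h/2 \<in> {-1..1} \<and> x - h/2 \<in> {-1..1}
                   then f (x + h/2) - f (x - h/2) else 0)"

definition Delta1_fw :: "(real \<Rightarrow> real) \<Rightarrow> real \<Rightarrow> real \<Rightarrow> real" where
  "Delta1_fw f h x = Delta1 f h (x + h/2)"

definition Delta1_bw :: "(real \<Rightarrow> real) \<Rightarrow> real \<Rightarrow> real \<Rightarrow> real" where
  "Delta1_bw f h x = Delta1 f h (x - h/2)"

definition Omega_main :: "(real \<Rightarrow> real) \<Rightarrow> real \<Rightarrow> (real \<Rightarrow> real) \<Rightarrow> real \<Rightarrow> ennreal" where
  "Omega_main f \<delta> w q = (SUP h \<in> {0<..\<delta>}.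
      Lq_norm q {-1 + 2*h\<^sup>2 .. 1 - 2*h\<^sup>2} (\<lambda>x. w x * Delta1 f (h * phi x) x))"

definition Omega_fw :: "(real \<Rightarrow> real) \<Rightarrow> real \<Rightarrow> (real \<Rightarrow> real) \<Rightarrow> real \<Rightarrow> ennreal" where
  "Omega_fw f \<delta> w q = (SUP h \<in> {0<..2*\<delta>\<^sup>2}.
      Lq_norm q {-1 .. -1 + 2*\<delta>\<^sup>2} (\<lambda>x. w x * Delta1_fw f h x))"

definition Omega_bw :: "(real \<Rightarrow> real) \<Rightarrow> real \<Rightarrow> (real \<Rightarrow> real) \<Rightarrow> real \<Rightarrow> ennreal" where
  "Omega_bw f \<delta> w q = (SUP h \<in> {0<..2*\<delta>\<^sup>2}.
      Lq_norm q {1 - 2*\<delta>\<^sup>2 .. 1} (\<lambda>x. w x * Delta1_bw f h x))"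

definition omega_phi :: "(real \<Rightarrow> real) \<Rightarrow> real \<Rightarrow> (real \<Rightarrow> real) \<Rightarrow> real \<Rightarrow> ennreal" where
  "omega_phi f \<delta> w q = Omega_main f \<delta> w q + Omega_fw f \<delta> w q + Omega_bw f \<delta> w q"

definition in_Wq :: "real \<Rightarrow> real \<Rightarrow> real \<Rightarrow> (real \<Rightarrow> real) \<Rightarrow> bool" where
  "in_Wq q \<alpha> \<beta> f \<longleftrightarrow> Lq_norm q {-1..1} (\<lambda>x. wab \<alpha> \<beta> x * f x) < \<infinity>"

end

theory Submission
  imports Defs
begin

text \<open>For \<open>q \<ge> 1\<close> and \<open>a, b \<ge> 0\<close> one has \<open>|a - b|\<^sup>q \<le> |a\<^sup>q - b\<^sup>q|\<close>, because \<open>t \<mapsto> t\<^sup>q\<close> is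
  superadditive on \<open>[0,\<infinity>)\<close>. Applied pointwise to the differences of \<open>f\<close> and of \<open>f\<^sup>q\<close>
  (the weight just gets raised to the power \<open>q\<close>), this bounds the \<open>q\<close>-th power of every
  \<open>L\<^sub>q\<close>-norm entering \<open>\<omega>\<^sub>\<phi>\<^sup>1(f,\<delta>)\<close> by the corresponding \<open>L\<^sub>1\<close>-norm entering \<open>\<omega>\<^sub>\<phi>\<^sup>1(f\<^sup>q,\<delta>)\<close>.
  Each of the three parts of the modulus is then dominated by the \<open>q\<close>-th root of the whole
  modulus of \<open>f\<^sup>q\<close>, which gives the constant \<open>c = 3\<close>.\<close>

lemma powr_add_le_powr_add:
  fixes u v q :: real
  assumes "0 \<le> u" "0 \<le> v" "1 \<le> q"
  shows "u powr q + v powr q \<le> (u + v) powr q"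
proof -
  have "u powr q + v powr q = u * u powr (q - 1) + v * v powr (q - 1)"
    using assms by (simp add: powr_mult_base)
  also have "\<dots> \<le> u * (u + v) powr (q - 1) + v * (u + v) powr (q - 1)"
    using assms by (intro add_mono mult_left_mono powr_mono2) auto
  also have "\<dots> = (u + v) powr q"
    using assms by (simp add: powr_mult_base distrib_right[symmetric])
  finally show ?thesis .
qed

lemma abs_diff_powr_le_abs_powr_diff:
  fixes a b q :: real
  assumes "0 \<le> a" "0 \<le> b" "1 \<le> q"
  shows "\<bar>a - b\<bar> powr q \<le> \<bar>a powr q - b powr q\<bar>"
proof -
  have ordered: "\<bar>a - b\<bar> powr q \<le> \<bar>a powr q - b powr q\<bar>" if "0 \<le> b" "b \<le> a" for a b :: real
  proof -
    have "(a - b) powr q + b powr q \<le> a powr q"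
      using powr_add_le_powr_add[of "a - b" b q] that assms(3) by simp
    then show ?thesis using that by simp
  qed
  show ?thesis
    using ordered[of b a] ordered[of a b] assms by (cases "b \<le> a") (auto simp: abs_minus_commute)
qed

lemma wab_nonneg: "0 \<le> wab \<alpha> \<beta> x"
  unfolding wab_def by simp

lemma wab_powr: "wab \<alpha> \<beta> x powr q = wab (q * \<alpha>) (q * \<beta>) x"
  unfolding wab_def by (simp add: powr_mult powr_powr mult.commute)

lemma eroot_one [simp]: "eroot 1 I = I"
  unfolding eroot_def by (cases I) auto

lemma eroot_mono:
  assumes "I \<le> J" "0 < q"
  shows "eroot q I \<le> eroot q J"
proof (cases "J = \<infinity>")
  case True
  then show ?thesis by (simp add: eroot_def)
next
  case False
  then have "I \<noteq> \<infinity>" using assms(1) top.extremum_uniqueI by auto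
  moreover have "enn2real I \<le> enn2real J"
    using assms(1) False by (intro enn2real_mono) (simp_all add: less_top)
  ultimately show ?thesis
    using False assms(2) by (auto simp: eroot_def intro!: ennreal_leI powr_mono2)
qed

lemma SUP_le_eroot_SUP:
  assumes "0 < q" "\<And>h. h \<in> A \<Longrightarrow> F h \<le> eroot q (G h)"
  shows "(SUP h\<in>A. F h) \<le> eroot q (SUP h\<in>A. G h)"
  using assms by (intro SUP_least order_trans[OF _ eroot_mono[OF SUP_upper]]) auto

lemma eroot_add3_le:
  assumes "0 < q"
  shows "eroot q A + eroot q B + eroot q C \<le> ennreal 3 * eroot q (A + B + C)"
proof -
  have "eroot q A \<le> eroot q (A + B + C)" "eroot q B \<le> eroot q (A + B + C)"
    "eroot q C \<le> eroot q (A + B + C)"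
    using assms by (intro eroot_mono; simp add: add_increasing add_increasing2 le_iff_add add.assoc)+
  then have "eroot q A + eroot q B + eroot q C \<le> (1 + 1 + 1) * eroot q (A + B + C)"
    by (simp only: distrib_right mult_1 add_mono)
  then show ?thesis by simp
qed

lemma abs_weighted_Delta1_powr_le:
  fixes q :: real
  assumes "1 \<le> q" "0 \<le> w" "\<forall>x\<in>{-1..1}. 0 \<le> f x"
  shows "\<bar>w * Delta1 f h x\<bar> powr q \<le> \<bar>w powr q * Delta1 (\<lambda>x. f x powr q) h x\<bar>"
proof (cases "x + h/2 \<in> {-1..1} \<and> x - h/2 \<in> {-1..1}")
  case True
  let ?a = "f (x + h/2)" and ?b = "f (x - h/2)"
  have "\<bar>w * Delta1 f h x\<bar> powr q = w powr q * \<bar>?a - ?b\<bar> powr q"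
    using True assms(2) by (simp add: Delta1_def abs_mult powr_mult)
  also have "\<dots> \<le> w powr q * \<bar>?a powr q - ?b powr q\<bar>"
    using True assms by (intro mult_left_mono abs_diff_powr_le_abs_powr_diff) auto
  also have "\<dots> = \<bar>w powr q * Delta1 (\<lambda>x. f x powr q) h x\<bar>"
    using True by (simp add: Delta1_def abs_mult)
  finally show ?thesis .
next
  case False
  then have "Delta1 f h x = 0" "Delta1 (\<lambda>x. f x powr q) h x = 0"
    unfolding Delta1_def by (simp_all only: if_False)
  then show ?thesis by simp
qed

lemma Lq_norm_weighted_Delta1_le:
  assumes "1 \<le> q" "\<forall>x. 0 \<le> w x" "\<forall>x\<in>{-1..1}. 0 \<le> f x"
  shows "Lq_norm q S (\<lambda>x. w x * Delta1 f (H x) (g x))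
    \<le> eroot q (Lq_norm 1 S (\<lambda>x. w x powr q * Delta1 (\<lambda>x. f x powr q) (H x) (g x)))"
  unfolding Lq_norm_def eroot_one
  using assms abs_weighted_Delta1_powr_le[OF assms(1) _ assms(3)]
  by (intro eroot_mono nn_integral_mono mult_right_mono ennreal_leI) auto

lemma omega_phi_le_eroot_omega_phi_powr:
  assumes "1 \<le> q" "\<forall>x. 0 \<le> w x" "\<forall>x\<in>{-1..1}. 0 \<le> f x"
  shows "omega_phi f \<delta> w q \<le> ennreal 3 * eroot q (omega_phi (\<lambda>x. f x powr q) \<delta> (\<lambda>x. w x powr q) 1)"
proof -
  let ?F = "\<lambda>x. f x powr q" and ?W = "\<lambda>x. w x powr q"
  have q: "0 < q" using assms(1) by simp
  note Lq = Lq_norm_weighted_Delta1_le[OF assms]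
  have "Omega_main f \<delta> w q \<le> eroot q (Omega_main ?F \<delta> ?W 1)"
    unfolding Omega_main_def by (rule SUP_le_eroot_SUP[OF q Lq])
  moreover have "Omega_fw f \<delta> w q \<le> eroot q (Omega_fw ?F \<delta> ?W 1)"
    unfolding Omega_fw_def Delta1_fw_def by (rule SUP_le_eroot_SUP[OF q Lq])
  moreover have "Omega_bw f \<delta> w q \<le> eroot q (Omega_bw ?F \<delta> ?W 1)"
    unfolding Omega_bw_def Delta1_bw_def by (rule SUP_le_eroot_SUP[OF q Lq])
  ultimately have "omega_phi f \<delta> w q \<le> eroot q (Omega_main ?F \<delta> ?W 1)
      + eroot q (Omega_fw ?F \<delta> ?W 1) + eroot q (Omega_bw ?F \<delta> ?W 1)"
    unfolding omega_phi_def by (intro add_mono)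
  also have "\<dots> \<le> ennreal 3 * eroot q (omega_phi ?F \<delta> ?W 1)"
    unfolding omega_phi_def by (rule eroot_add3_le[OF q])
  finally show ?thesis .
qed

theorem lemma4p3:
  fixes q \<alpha> \<beta> :: real
  assumes "1 < q"
  shows "\<exists>c::real. c > 0 \<and>
    (\<forall>f :: real \<Rightarrow> real.
       set_borel_measurable lborel {-1..1} f \<longrightarrow>
       (\<forall>x\<in>{-1..1}. 0 \<le> f x) \<longrightarrow>
       in_Wq q \<alpha> \<beta> f \<longrightarrow>
       (\<forall>\<delta>>0. omega_phi f \<delta> (wab \<alpha> \<beta>) q
              \<le> ennreal c * eroot q (omega_phi (\<lambda>x. f x powr q) \<delta> (wab (q*\<alpha>) (q*\<beta>)) 1)))"
proof (intro exI[of _ 3] conjI allI impI)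
  fix f :: "real \<Rightarrow> real" and \<delta> :: real
  assume "\<forall>x\<in>{-1..1}. 0 \<le> f x"
  then have "omega_phi f \<delta> (wab \<alpha> \<beta>) q
      \<le> ennreal 3 * eroot q (omega_phi (\<lambda>x. f x powr q) \<delta> (\<lambda>x. wab \<alpha> \<beta> x powr q) 1)"
    using assms by (intro omega_phi_le_eroot_omega_phi_powr) (auto simp: wab_nonneg)
  then show "omega_phi f \<delta> (wab \<alpha> \<beta>) q
      \<le> ennreal 3 * eroot q (omega_phi (\<lambda>x. f x powr q) \<delta> (wab (q*\<alpha>) (q*\<beta>)) 1)"
    by (simp only: wab_powr)
qed simp

end
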